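(* Let $(X,\mathscr{A},\mu)$ be a $\sigma$-finite measure space and $\phi$ a nonsingular transformation of $X$ such that $C_\phi$ is quasinormal. Then there exists a $\phi^{-1}(\mathscr{A})$-measurable family $P\colon X\times\mathfrak{B}(\mathbb{R}_+)\to[0,1]$ of probability measures satisfying (CC): $\mathsf{E}(P(\cdot,\sigma))(x)=\dfrac{\int_\sigma t\,P(\phi(x),\mathrm{d}t)}{\mathsf{h}_\phi(\phi(x))}$ for $\mu$-a.e. $x\in X$, for every $\sigma\in\mathfrak{B}(\mathbb{R}_+)$. Moreover, if $\widetilde P\colon X\times\mathfrak{B}(\mathbb{R}_+)\to[0,1]$ is any $\mathscr{A}$-measurable family of probability measures satisfying (CC) (with $\widetilde P$ in place of $P$), then $\widetilde P(x,\cdot)=P(x,\cdot)$ for $\mu$-a.e. $x\in X$.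
   Context: $\mathbb{R}_+=[0,\infty)$. Conventions: $0\cdot\infty=0$, $1/0=\infty$, $0/0=1$. Nonsingular: $\phi^{-1}(\Delta)\in\mathscr{A}$ for $\Delta\in\mathscr{A}$ and $\mu(\phi^{-1}(\Delta))=0$ when $\mu(\Delta)=0$. $C_\phi f=f\circ\phi$ on $\{f\in L^2(\mu):f\circ\phi\in L^2(\mu)\}$; a closed densely defined operator $A$ with polar decomposition $A=U|A|$ is quasinormal if $U|A|\subseteq|A|U$ (quasinormality of $C_\phi$ entails that $C_\phi$ is densely defined, hence $\mathsf{h}_\phi<\infty$ a.e.). $\mathsf{h}_\phi$ is the Radon–Nikodym derivative of $\mu\circ\phi^{-1}$ w.r.t. $\mu$. $\mathsf{E}(f)$, for $\mathscr{A}$-measurable $f\ge0$, is the conditional expectation w.r.t. $\phi^{-1}(\mathscr{A})$: the a.e. unique $\phi^{-1}(\mathscr{A})$-measurable function with $\int(g\circ\phi)f\,\mathrm{d}\mu=\int(g\circ\phi)\mathsf{E}(f)\,\mathrm{d}\mu$ for all $\mathscr{A}$-measurable $g\ge0$. A $\mathscr{B}$-measurable family of probability measures ($\mathscr{B}$ a $\sigma$-algebra on $X$): each $P(x,\cdot)$ is a Borel probability measure on $\mathbb{R}_+$ and each $P(\cdot,\sigma)$ is $\mathscr{B}$-measurable. *)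

theory Defs
  imports "HOL-Probability.Probability"
begin

definition L2 :: "'a measure \<Rightarrow> ('a \<Rightarrow> complex) set" where
  "L2 M = {f. f \<in> borel_measurable M \<and> integrable M (\<lambda>x. (cmod (f x))\<^sup>2)}"

definition aeq :: "'a measure \<Rightarrow> ('a \<Rightarrow> complex) \<Rightarrow> ('a \<Rightarrow> complex) \<Rightarrow> bool" where
  "aeq M f g \<longleftrightarrow> (AE x in M. f x = g x)"

definition ip :: "'a measure \<Rightarrow> ('a \<Rightarrow> complex) \<Rightarrow> ('a \<Rightarrow> complex) \<Rightarrow> complex" where
  "ip M f g = (LINT x|M. f x * cnj (g x))"

definition l2norm :: "'a measure \<Rightarrow> ('a \<Rightarrow> complex) \<Rightarrow> real" where
  "l2norm M f = sqrt (LINT x|M. (cmod (f x))\<^sup>2)"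

text \<open>(Possibly unbounded) linear operators in L2(mu) are represented by their graphs,
  as relations on square-integrable representatives, saturated w.r.t. a.e. equality.
  Composition "S T" (first T, then S) is the relational composition  T O S.\<close>

type_synonym 'a op = "(('a \<Rightarrow> complex) \<times> ('a \<Rightarrow> complex)) set"

definition is_operator :: "'a measure \<Rightarrow> 'a op \<Rightarrow> bool" where
  "is_operator M A \<longleftrightarrow>
     A \<subseteq> L2 M \<times> L2 M \<and>
     (\<forall>f g f' g'. (f, g) \<in> A \<longrightarrow> f' \<in> L2 M \<longrightarrow> g' \<in> L2 M \<longrightarrow> aeq M f f' \<longrightarrow> aeq M g g'
        \<longrightarrow> (f', g') \<in> A) \<and>
     (\<forall>f g g'. (f, g) \<in> A \<longrightarrow> (f, g') \<in> A \<longrightarrow> aeq M g g') \<and>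
     (\<forall>f g f' g'. (f, g) \<in> A \<longrightarrow> (f', g') \<in> A \<longrightarrow> ((\<lambda>x. f x + f' x), (\<lambda>x. g x + g' x)) \<in> A) \<and>
     (\<forall>f g (c::complex). (f, g) \<in> A \<longrightarrow> ((\<lambda>x. c * f x), (\<lambda>x. c * g x)) \<in> A)"

definition densely_defined :: "'a measure \<Rightarrow> 'a op \<Rightarrow> bool" where
  "densely_defined M A \<longleftrightarrow>
     (\<forall>f \<in> L2 M. \<forall>\<epsilon>>0. \<exists>g \<in> Domain A. l2norm M (\<lambda>x. f x - g x) < \<epsilon>)"

definition closed_op :: "'a measure \<Rightarrow> 'a op \<Rightarrow> bool" where
  "closed_op M A \<longleftrightarrow>
     (\<forall>F G f g. (\<forall>n. (F n, G n) \<in> A) \<longrightarrow> f \<in> L2 M \<longrightarrow> g \<in> L2 M \<longrightarrow>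
        (\<lambda>n. l2norm M (\<lambda>x. F n x - f x)) \<longlonglongrightarrow> 0 \<longrightarrow> (\<lambda>n. l2norm M (\<lambda>x. G n x - g x)) \<longlonglongrightarrow> 0 \<longrightarrow>
        (f, g) \<in> A)"

definition adjoint :: "'a measure \<Rightarrow> 'a op \<Rightarrow> 'a op" where
  "adjoint M A = {(g, h). g \<in> L2 M \<and> h \<in> L2 M \<and>
                     (\<forall>(f, k) \<in> A. ip M k g = ip M f h)}"

definition op_kernel :: "'a measure \<Rightarrow> 'a op \<Rightarrow> ('a \<Rightarrow> complex) set" where
  "op_kernel M A = {f. (f, (\<lambda>_. 0)) \<in> A}"

definition positive_selfadjoint :: "'a measure \<Rightarrow> 'a op \<Rightarrow> bool" where
  "positive_selfadjoint M T \<longleftrightarrow> is_operator M T \<and> densely_defined M T \<and>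
     adjoint M T = T \<and> (\<forall>(f, g) \<in> T. 0 \<le> Re (ip M g f))"

text \<open>T is the modulus |A| = (A*A)^(1/2): the positive selfadjoint operator with T T = A* A.\<close>
definition is_modulus :: "'a measure \<Rightarrow> 'a op \<Rightarrow> 'a op \<Rightarrow> bool" where
  "is_modulus M A T \<longleftrightarrow> positive_selfadjoint M T \<and> T O T = A O adjoint M A"

definition partial_isometry :: "'a measure \<Rightarrow> 'a op \<Rightarrow> bool" where
  "partial_isometry M U \<longleftrightarrow> is_operator M U \<and> Domain U = L2 M \<and>
     (\<forall>(f, g) \<in> U. (\<forall>k \<in> op_kernel M U. ip M f k = 0) \<longrightarrow> l2norm M g = l2norm M f)"

text \<open>Quasinormality: A closed densely defined with polar decomposition A = U|A|
  (U partial isometry with kernel N(U) = N(A)), and U|A| \<subseteq> |A|U.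
  The polar decomposition is unique, so quantifying existentially over it is harmless.\<close>
definition quasinormal :: "'a measure \<Rightarrow> 'a op \<Rightarrow> bool" where
  "quasinormal M A \<longleftrightarrow> is_operator M A \<and> closed_op M A \<and> densely_defined M A \<and>
     (\<exists>U T. is_modulus M A T \<and> partial_isometry M U \<and> op_kernel M U = op_kernel M A \<and>
            A = T O U \<and> T O U \<subseteq> U O T)"

definition nonsingular :: "'a measure \<Rightarrow> ('a \<Rightarrow> 'a) \<Rightarrow> bool" where
  "nonsingular M \<phi> \<longleftrightarrow> \<phi> \<in> M \<rightarrow>\<^sub>M M \<and>
     (\<forall>\<Delta> \<in> sets M. emeasure M \<Delta> = 0 \<longrightarrow> emeasure M (\<phi> -` \<Delta> \<inter> space M) = 0)"

definition comp_op :: "'a measure \<Rightarrow> ('a \<Rightarrow> 'a) \<Rightarrow> 'a op" where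
  "comp_op M \<phi> = {(f, g). f \<in> L2 M \<and> g \<in> L2 M \<and> (AE x in M. g x = f (\<phi> x))}"

definition h_phi :: "'a measure \<Rightarrow> ('a \<Rightarrow> 'a) \<Rightarrow> 'a \<Rightarrow> ennreal" where
  "h_phi M \<phi> = RN_deriv M (distr M M \<phi>)"

definition is_cond_exp :: "'a measure \<Rightarrow> ('a \<Rightarrow> 'a) \<Rightarrow> ('a \<Rightarrow> ennreal) \<Rightarrow> ('a \<Rightarrow> ennreal) \<Rightarrow> bool" where
  "is_cond_exp M \<phi> f e \<longleftrightarrow> e \<in> borel_measurable (vimage_algebra (space M) \<phi> M) \<and>
     (\<forall>g \<in> borel_measurable M. (\<integral>\<^sup>+x. g (\<phi> x) * f x \<partial>M) = (\<integral>\<^sup>+x. g (\<phi> x) * e x \<partial>M))"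

text \<open>Division in [0,oo] with the conventions 1/0 = oo, 0/0 = 1 (and 0 * oo = 0).\<close>
definition cdiv :: "ennreal \<Rightarrow> ennreal \<Rightarrow> ennreal" where
  "cdiv a b = (if a = 0 \<and> b = 0 then 1 else a / b)"

abbreviation Bor_Rplus :: "real measure" where
  "Bor_Rplus \<equiv> restrict_space borel {0..}"

definition prob_family :: "'a measure \<Rightarrow> ('a \<Rightarrow> real measure) \<Rightarrow> bool" where
  "prob_family B P \<longleftrightarrow>
     (\<forall>x \<in> space B. prob_space (P x) \<and> sets (P x) = sets Bor_Rplus) \<and>
     (\<forall>\<sigma> \<in> sets Bor_Rplus. (\<lambda>x. emeasure (P x) \<sigma>) \<in> borel_measurable B)"

definition CC :: "'a measure \<Rightarrow> ('a \<Rightarrow> 'a) \<Rightarrow> ('a \<Rightarrow> real measure) \<Rightarrow> bool" where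
  "CC M \<phi> P \<longleftrightarrow> (\<forall>\<sigma> \<in> sets Bor_Rplus. \<exists>e. is_cond_exp M \<phi> (\<lambda>x. emeasure (P x) \<sigma>) e \<and>
     (AE x in M. e x = cdiv (\<integral>\<^sup>+t\<in>\<sigma>. ennreal t \<partial>(P (\<phi> x))) (h_phi M \<phi> (\<phi> x))))"

end

theory Submission
  imports Defs
begin

text \<open>Let \<open>h\<close> be the Radon--Nikodym derivative of \<open>\<mu> \<circ> \<phi>\<inverse>\<close>. On functions of the form \<open>f \<circ> \<phi>\<close>
  the adjoint \<open>C\<^sub>\<phi>\<^sup>*\<close> acts as multiplication of \<open>f\<close> by \<open>h\<close>, so \<open>C\<^sub>\<phi>\<^sup>*C\<^sub>\<phi>\<close> is multiplication by \<open>h\<close>.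
  Quasinormality yields \<open>C\<^sub>\<phi> (C\<^sub>\<phi>\<^sup>*C\<^sub>\<phi>) \<subseteq> (C\<^sub>\<phi>\<^sup>*C\<^sub>\<phi>) C\<^sub>\<phi>\<close>; testing this on indicators of sets
  where \<open>h\<close> is bounded gives \<open>h \<circ> \<phi> = h\<close> a.e. Consequently \<open>P(x) = \<delta>\<^bsub>h(\<phi> x)\<^esub>\<close> is
  \<open>\<phi>\<inverse>(\<A>)\<close>-measurable and satisfies (CC). Conversely, integrating (CC) against \<open>g \<circ> \<phi>\<close> gives
  \<open>\<integral> g(\<phi> x) \<integral> u dQ\<^sub>x d\<mu> = \<integral> g(y) \<integral> t u(t) dQ\<^sub>y d\<mu>\<close>; with \<open>u = 1\<close> and \<open>u = t\<close> the first two moments of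
  \<open>Q\<^sub>y\<close> are \<open>h(y)\<close> and \<open>h(y)\<^sup>2\<close>, so \<open>Q\<^sub>y\<close> has zero variance and equals \<open>\<delta>\<^bsub>h(y)\<^esub> = \<delta>\<^bsub>h(\<phi> y)\<^esub>\<close>.\<close>

lemma borel_measurable_cnj [measurable]:
  assumes "f \<in> borel_measurable M"
  shows "(\<lambda>x. cnj (f x)) \<in> borel_measurable M"
proof -
  have "cnj \<in> borel_measurable borel"
    by (intro borel_measurable_continuous_onI continuous_on_cnj continuous_on_id)
  then show ?thesis using measurable_compose[OF assms] by blast
qed

lemma L2_borel_measurable: "f \<in> L2 M \<Longrightarrow> f \<in> borel_measurable M"
  by (simp add: L2_def)

lemma L2_iff_nn_integral:
  "f \<in> L2 M \<longleftrightarrow> f \<in> borel_measurable M \<and> (\<integral>\<^sup>+x. ennreal ((cmod (f x))\<^sup>2) \<partial>M) < \<infinity>"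
  by (auto simp: L2_def integrable_iff_bounded)

lemma L2_integrable_mult_cnj:
  assumes "f \<in> L2 M" "g \<in> L2 M"
  shows "integrable M (\<lambda>x. f x * cnj (g x))"
proof (rule Bochner_Integration.integrable_bound[of M "\<lambda>x. (cmod (f x))\<^sup>2 + (cmod (g x))\<^sup>2"])
  show "integrable M (\<lambda>x. (cmod (f x))\<^sup>2 + (cmod (g x))\<^sup>2)"
    using assms by (intro Bochner_Integration.integrable_add) (simp_all add: L2_def)
  show "(\<lambda>x. f x * cnj (g x)) \<in> borel_measurable M"
    using assms[THEN L2_borel_measurable] by measurable
  show "AE x in M. norm (f x * cnj (g x)) \<le> norm ((cmod (f x))\<^sup>2 + (cmod (g x))\<^sup>2)"
  proof (intro AE_I2)
    fix x
    have "cmod (f x) * cmod (g x) \<le> 2 * cmod (f x) * cmod (g x)" by simp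
    also have "\<dots> \<le> (cmod (f x))\<^sup>2 + (cmod (g x))\<^sup>2" by (rule sum_squares_bound)
    finally show "norm (f x * cnj (g x)) \<le> norm ((cmod (f x))\<^sup>2 + (cmod (g x))\<^sup>2)"
      by (simp add: norm_mult)
  qed
qed

lemma L2_integrable_diff_sq:
  assumes "f \<in> L2 M" "g \<in> L2 M"
  shows "integrable M (\<lambda>x. (cmod (f x - g x))\<^sup>2)"
proof (rule Bochner_Integration.integrable_bound[of M "\<lambda>x. 2 * (cmod (f x))\<^sup>2 + 2 * (cmod (g x))\<^sup>2"])
  show "integrable M (\<lambda>x. 2 * (cmod (f x))\<^sup>2 + 2 * (cmod (g x))\<^sup>2)"
    using assms by (intro Bochner_Integration.integrable_add integrable_mult_right) (simp_all add: L2_def)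
  show "(\<lambda>x. (cmod (f x - g x))\<^sup>2) \<in> borel_measurable M"
    using assms[THEN L2_borel_measurable] by measurable
  show "AE x in M. norm ((cmod (f x - g x))\<^sup>2) \<le> norm (2 * (cmod (f x))\<^sup>2 + 2 * (cmod (g x))\<^sup>2)"
  proof (intro AE_I2)
    fix x
    have "(cmod (f x - g x))\<^sup>2 \<le> (cmod (f x) + cmod (g x))\<^sup>2"
      by (intro power_mono norm_triangle_ineq4) simp
    also have "\<dots> \<le> 2 * (cmod (f x))\<^sup>2 + 2 * (cmod (g x))\<^sup>2"
      using sum_squares_bound[of "cmod (f x)" "cmod (g x)"] by (simp add: power2_sum)
    finally show "norm ((cmod (f x - g x))\<^sup>2) \<le> norm (2 * (cmod (f x))\<^sup>2 + 2 * (cmod (g x))\<^sup>2)"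
      by simp
  qed
qed

lemma L2_bounded_finite_support:
  assumes "f \<in> borel_measurable M" "S \<in> sets M" "emeasure M S < \<infinity>"
    and "\<And>x. x \<in> space M \<Longrightarrow> cmod (f x) \<le> c"
    and "\<And>x. x \<in> space M \<Longrightarrow> x \<notin> S \<Longrightarrow> f x = 0"
  shows "f \<in> L2 M"
  unfolding L2_def
proof (intro CollectI conjI integrableI_bounded_set[where B = "c\<^sup>2"])
  show "AE x\<in>S in M. norm ((cmod (f x))\<^sup>2) \<le> c\<^sup>2"
    using assms(4) by (intro AE_I2) (auto intro!: power_mono)
qed (use assms in \<open>auto intro!: AE_I2\<close>)

lemma (in sigma_finite_measure) AE_from_finite_bounded_pieces:
  fixes b :: "'a \<Rightarrow> ennreal" and \<psi> :: "'b \<Rightarrow> 'a"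
  assumes b[measurable]: "b \<in> borel_measurable M"
    and \<psi>: "\<And>x. x \<in> space N \<Longrightarrow> \<psi> x \<in> space M"
    and finite: "AE x in N. b (\<psi> x) < \<infinity>"
    and pieces: "\<And>S n. S \<in> sets M \<Longrightarrow> emeasure M S < \<infinity> \<Longrightarrow> (\<And>y. y \<in> S \<Longrightarrow> b y \<le> of_nat n)
       \<Longrightarrow> AE x in N. \<psi> x \<in> S \<longrightarrow> P x"
  shows "AE x in N. P x"
proof -
  obtain F :: "nat \<Rightarrow> 'a set" where F: "range F \<subseteq> sets M" "\<Union> (range F) = space M"
    "\<And>i. emeasure M (F i) \<noteq> \<infinity>" "incseq F"
    using sigma_finite_incseq by metis
  define S where "S n = {y \<in> space M. b y \<le> of_nat n} \<inter> F n" for n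
  have "AE x in N. \<psi> x \<in> S n \<longrightarrow> P x" for n
  proof (rule pieces[where n = n])
    show "S n \<in> sets M" using F by (auto simp: S_def)
    have "emeasure M (S n) \<le> emeasure M (F n)"
      using F by (intro emeasure_mono) (auto simp: S_def)
    then show "emeasure M (S n) < \<infinity>"
      using F(3)[of n] by (simp add: less_top order.strict_trans1)
  qed (simp add: S_def)
  then have "AE x in N. \<forall>n. \<psi> x \<in> S n \<longrightarrow> P x"
    unfolding AE_all_countable by blast
  with finite AE_space show ?thesis
  proof eventually_elim
    case (elim x)
    obtain n0 where n0: "\<psi> x \<in> F n0" using F(2) \<psi> elim(2) by auto
    obtain n1 where n1: "b (\<psi> x) < of_nat n1" using elim(1) by (metis ennreal_Ex_less_of_nat infinity_ennreal_def)
    have "\<psi> x \<in> F (max n0 n1)" using n0 F(4) by (meson incseq_def max.cobounded1 subsetD)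
    moreover have "b (\<psi> x) \<le> of_nat (max n0 n1)"
      using n1 by (meson less_imp_le max.cobounded2 of_nat_mono order.trans)
    ultimately have "\<psi> x \<in> S (max n0 n1)" using \<psi> elim(2) by (simp add: S_def)
    with elim(3) show ?case by blast
  qed
qed

lemma borel_measurable_ennreal_Bor_Rplus [measurable]: "ennreal \<in> borel_measurable Bor_Rplus"
  by (rule measurable_restrict_space1) simp

lemma prob_familyD:
  assumes "prob_family M Q" and "x \<in> space M"
  shows "prob_space (Q x)" and "sets (Q x) = sets Bor_Rplus"
  using assms by (simp_all add: prob_family_def)

lemma prob_family_measurable_subprob_algebra:
  assumes "prob_family M Q"
  shows "Q \<in> M \<rightarrow>\<^sub>M subprob_algebra Bor_Rplus"
proof (rule measurable_subprob_algebra)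
  fix x assume "x \<in> space M"
  then show "subprob_space (Q x)" and "sets (Q x) = sets Bor_Rplus"
    using prob_familyD[OF assms] by (simp_all add: prob_space_imp_subprob_space)
qed (use assms in \<open>simp add: prob_family_def\<close>)

lemma prob_family_nn_integral_measurable:
  assumes "prob_family M Q" and "u \<in> borel_measurable Bor_Rplus"
  shows "(\<lambda>x. \<integral>\<^sup>+t. u t \<partial>Q x) \<in> borel_measurable M"
  using measurable_compose[OF prob_family_measurable_subprob_algebra[OF assms(1)]
      nn_integral_measurable_subprob_algebra[OF assms(2)]] .

lemma prob_space_eq_return_if_variance_zero:
  assumes "prob_space N" and sets_N: "sets N = sets Bor_Rplus" and "0 \<le> c"
    and mean: "(\<integral>\<^sup>+t. ennreal t \<partial>N) = ennreal c"
    and second_moment: "(\<integral>\<^sup>+t. ennreal t * ennreal t \<partial>N) = ennreal (c * c)"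
  shows "N = return Bor_Rplus c"
proof -
  interpret prob_space N by fact
  have measurable_N: "g \<in> borel_measurable N" if "g \<in> borel_measurable borel" for g :: "real \<Rightarrow> ennreal"
    using measurable_restrict_space1[OF that] by (simp add: measurable_cong_sets[OF sets_N refl])
  have space_N: "space N = {0..}"
    using sets_eq_imp_space_eq[OF sets_N] by (simp add: space_restrict_space)
  \<comment> \<open>Integrate \<open>(t - c)\<^sup>2 + 2 c t = t\<^sup>2 + c\<^sup>2\<close>; every term is finite, so the variance cancels to \<open>0\<close>.\<close>
  have pointwise: "ennreal ((t - c)\<^sup>2) + ennreal (2 * c) * ennreal t = ennreal t * ennreal t + ennreal (c * c)"
    if "t \<in> space N" for t
  proof -
    have "0 \<le> t" using that by (simp add: space_N)
    have "ennreal ((t - c)\<^sup>2) + ennreal (2 * c) * ennreal t = ennreal ((t - c)\<^sup>2 + 2 * c * t)"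
      using \<open>0 \<le> t\<close> \<open>0 \<le> c\<close> by (simp add: ennreal_mult'[symmetric] ennreal_plus[symmetric] del: ennreal_plus)
    also have "(t - c)\<^sup>2 + 2 * c * t = t * t + c * c"
      by (simp add: power2_eq_square algebra_simps)
    finally show ?thesis
      using \<open>0 \<le> t\<close> \<open>0 \<le> c\<close> by (simp add: ennreal_mult'[symmetric] ennreal_plus[symmetric] del: ennreal_plus)
  qed
  have [simp]: "(\<lambda>t. ennreal ((t - c)\<^sup>2)) \<in> borel_measurable N" "(\<lambda>t. ennreal t) \<in> borel_measurable N"
    "(\<lambda>t. ennreal t * ennreal t) \<in> borel_measurable N"
    "(\<lambda>t. ennreal (2 * c) * ennreal t) \<in> borel_measurable N"
    by (intro measurable_N; measurable)+
  have "(\<integral>\<^sup>+t. ennreal ((t - c)\<^sup>2) \<partial>N) + ennreal (2 * c) * ennreal c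
      = (\<integral>\<^sup>+t. ennreal ((t - c)\<^sup>2) + ennreal (2 * c) * ennreal t \<partial>N)"
    by (subst nn_integral_add) (simp_all add: nn_integral_cmult mean)
  also have "\<dots> = (\<integral>\<^sup>+t. ennreal t * ennreal t + ennreal (c * c) \<partial>N)"
    by (rule nn_integral_cong) (rule pointwise)
  also have "\<dots> = ennreal (c * c) + ennreal (c * c)"
    by (simp add: nn_integral_add second_moment emeasure_space_1)
  also have "\<dots> = 0 + ennreal (2 * c) * ennreal c"
    using \<open>0 \<le> c\<close> by (simp add: ennreal_mult'[symmetric] ennreal_plus[symmetric] del: ennreal_plus)
  finally have "(\<integral>\<^sup>+t. ennreal ((t - c)\<^sup>2) \<partial>N) = 0"
    using ennreal_add_left_cancel[of "ennreal (2 * c) * ennreal c"] by (simp add: add.commute ennreal_mult_eq_top_iff)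
  then have "AE t in N. t = c"
    by (subst (asm) nn_integral_0_iff_AE) (auto simp: measurable_N elim!: AE_mp)
  then show ?thesis
    using AE_eq_constD(1) return_sets_cong[OF sets_N] by metis
qed

lemma quasinormal_commutation:
  assumes "quasinormal M A"
  shows "(A O adjoint M A) O A \<subseteq> A O (A O adjoint M A)"
proof -
  from assms obtain U T where T_sq: "T O T = A O adjoint M A" and A: "A = T O U"
    and commute: "T O U \<subseteq> U O T"
    unfolding quasinormal_def is_modulus_def by blast
  have "(T O T) O (T O U) = T O (T O (T O U))" by (simp add: O_assoc)
  also have "\<dots> \<subseteq> T O (T O (U O T))" using commute by blast
  also have "\<dots> = T O ((T O U) O T)" by (simp add: O_assoc)
  also have "\<dots> \<subseteq> T O ((U O T) O T)" using commute by blast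
  also have "\<dots> = (T O U) O (T O T)" by (simp add: O_assoc)
  finally show ?thesis by (simp only: T_sq A)
qed

locale nonsingular_transformation =
  fixes M :: "'a measure" and \<phi> :: "'a \<Rightarrow> 'a"
  assumes sigma_finite: "sigma_finite_measure M"
    and nonsingular: "nonsingular M \<phi>"
begin

abbreviation h :: "'a \<Rightarrow> ennreal" where
  "h \<equiv> h_phi M \<phi>"

abbreviation C :: "'a op" where
  "C \<equiv> comp_op M \<phi>"

definition hr :: "'a \<Rightarrow> real" where
  "hr x = enn2real (h x)"

lemma hr_nonneg: "0 \<le> hr x"
  by (simp add: hr_def)

lemma h_eq_hr: "h x \<noteq> \<infinity> \<Longrightarrow> h x = ennreal (hr x)"
  by (simp add: hr_def ennreal_enn2real_if)

lemma measurable_phi [measurable]: "\<phi> \<in> M \<rightarrow>\<^sub>M M"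
  using nonsingular by (simp add: nonsingular_def)

lemma phi_in_space: "x \<in> space M \<Longrightarrow> \<phi> x \<in> space M"
  using measurable_space[OF measurable_phi] .

lemma borel_measurable_h [measurable]: "h \<in> borel_measurable M"
  by (simp add: h_phi_def)

lemma borel_measurable_hr [measurable]: "hr \<in> borel_measurable M"
  unfolding hr_def[abs_def] by simp

lemma AE_compose:
  assumes "AE x in M. P x"
  shows "AE x in M. P (\<phi> x)"
proof -
  obtain N where N: "{x\<in>space M. \<not> P x} \<subseteq> N" "N \<in> null_sets M"
    using assms by (auto elim!: AE_E)
  have "\<phi> -` N \<inter> space M \<in> null_sets M"
    using nonsingular N by (auto simp: nonsingular_def null_sets_def)
  moreover have "{x\<in>space M. \<not> P (\<phi> x)} \<subseteq> \<phi> -` N \<inter> space M"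
    using N phi_in_space by auto
  ultimately show ?thesis by (auto intro: AE_I')
qed

lemma density_h: "density M h = distr M M \<phi>"
proof -
  have "absolutely_continuous M (distr M M \<phi>)"
    using nonsingular
    by (auto simp: absolutely_continuous_def nonsingular_def null_sets_def emeasure_distr)
  then show ?thesis
    unfolding h_phi_def by (intro sigma_finite_measure.density_RN_deriv[OF sigma_finite]) simp_all
qed

lemma nn_integral_compose:
  assumes "f \<in> borel_measurable M"
  shows "(\<integral>\<^sup>+x. f (\<phi> x) \<partial>M) = (\<integral>\<^sup>+x. h x * f x \<partial>M)"
proof -
  have "(\<integral>\<^sup>+x. f (\<phi> x) \<partial>M) = (\<integral>\<^sup>+x. f x \<partial>distr M M \<phi>)"
    using assms by (simp add: nn_integral_distr)
  also have "\<dots> = (\<integral>\<^sup>+x. h x * f x \<partial>M)"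
    using assms by (simp add: nn_integral_density density_h[symmetric])
  finally show ?thesis .
qed

lemma integral_compose:
  assumes hf: "AE x in M. h x \<noteq> \<infinity>" and [measurable]: "F \<in> borel_measurable M"
    and int: "integrable M (\<lambda>x. F (\<phi> x))"
  shows "integrable M (\<lambda>x. complex_of_real (hr x) * F x)"
    and "(LINT x|M. F (\<phi> x)) = (LINT x|M. complex_of_real (hr x) * F x)"
proof -
  have distr: "distr M M \<phi> = density M (\<lambda>x. ennreal (hr x))"
    unfolding density_h[symmetric] using hf
    by (intro density_cong) (auto elim!: AE_mp simp: h_eq_hr)
  have "integrable (density M (\<lambda>x. ennreal (hr x))) F"
    using int by (simp add: integrable_distr_eq distr[symmetric])
  then show "integrable M (\<lambda>x. complex_of_real (hr x) * F x)"
    by (simp add: integrable_density hr_nonneg scaleR_conv_of_real)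
  have "(LINT x|M. F (\<phi> x)) = integral\<^sup>L (density M (\<lambda>x. ennreal (hr x))) F"
    by (simp add: integral_distr distr[symmetric])
  then show "(LINT x|M. F (\<phi> x)) = (LINT x|M. complex_of_real (hr x) * F x)"
    by (simp add: integral_density hr_nonneg scaleR_conv_of_real)
qed

lemma AE_h_compose_nonzero: "AE x in M. h (\<phi> x) \<noteq> 0"
proof -
  have "(\<integral>\<^sup>+x. indicator {y. h y = 0} (\<phi> x) \<partial>M) = (\<integral>\<^sup>+x. h x * indicator {y. h y = 0} x \<partial>M)"
    by (rule nn_integral_compose) simp
  also have "\<dots> = 0"
    by (rule nn_integral_0_iff_AE[THEN iffD2]) (auto simp: indicator_def)
  finally have "AE x in M. indicator {y. h y = 0} (\<phi> x) = (0::ennreal)"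
    by (subst (asm) nn_integral_0_iff_AE) simp_all
  then show ?thesis by (auto elim!: AE_mp simp: indicator_def)
qed

lemma L2_compose_iff:
  assumes "f \<in> borel_measurable M"
  shows "(\<lambda>x. f (\<phi> x)) \<in> L2 M \<longleftrightarrow> (\<integral>\<^sup>+x. h x * ennreal ((cmod (f x))\<^sup>2) \<partial>M) < \<infinity>"
  using assms nn_integral_compose[of "\<lambda>x. ennreal ((cmod (f x))\<^sup>2)"]
  by (simp add: L2_iff_nn_integral)

lemma L2_compose_bounded_finite_support:
  assumes f[measurable]: "f \<in> borel_measurable M"
    and S[measurable]: "S \<in> sets M" and S_finite: "emeasure M S < \<infinity>"
    and h_bounded: "\<And>x. x \<in> S \<Longrightarrow> h x \<le> ennreal c" and "0 \<le> c"
    and f_bounded: "\<And>x. x \<in> space M \<Longrightarrow> cmod (f x) \<le> d"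
    and f_support: "\<And>x. x \<in> space M \<Longrightarrow> x \<notin> S \<Longrightarrow> f x = 0"
  shows "f \<in> L2 M" and "(\<lambda>x. f (\<phi> x)) \<in> L2 M"
proof -
  show "f \<in> L2 M"
    using f_bounded f_support by (intro L2_bounded_finite_support[OF f S S_finite])
  have "h x * ennreal ((cmod (f x))\<^sup>2) \<le> ennreal (c * d\<^sup>2) * indicator S x" if "x \<in> space M" for x
  proof (cases "x \<in> S")
    case True
    have "h x * ennreal ((cmod (f x))\<^sup>2) \<le> ennreal c * ennreal (d\<^sup>2)"
      using True that h_bounded f_bounded by (intro mult_mono ennreal_leI power_mono) auto
    with True \<open>0 \<le> c\<close> show ?thesis by (simp add: ennreal_mult)
  qed (simp add: f_support that)
  then have "(\<integral>\<^sup>+x. h x * ennreal ((cmod (f x))\<^sup>2) \<partial>M) \<le> ennreal (c * d\<^sup>2) * emeasure M S"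
    by (subst nn_integral_cmult_indicator[symmetric]) (auto intro: nn_integral_mono)
  also have "\<dots> < \<infinity>"
    using S_finite by (simp add: ennreal_mult_less_top less_top)
  finally show "(\<lambda>x. f (\<phi> x)) \<in> L2 M"
    by (simp add: L2_compose_iff)
qed

lemma comp_op_graphI: "f \<in> L2 M \<Longrightarrow> (\<lambda>x. f (\<phi> x)) \<in> L2 M \<Longrightarrow> (f, \<lambda>x. f (\<phi> x)) \<in> C"
  by (simp add: comp_op_def)

lemma comp_op_domain_vanishes_where_h_infinite:
  assumes "g \<in> Domain (C)"
  shows "AE x in M. h x = \<infinity> \<longrightarrow> g x = 0"
proof -
  obtain k where g: "g \<in> L2 M" and "k \<in> L2 M" and k: "AE x in M. k x = g (\<phi> x)"
    using assms by (auto simp: comp_op_def)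
  then have "(\<lambda>x. g (\<phi> x)) \<in> L2 M"
    by (auto simp: L2_def elim: integrable_cong_AE_imp intro!: measurable_compose[OF _ L2_borel_measurable[OF g]])
  then have "(\<integral>\<^sup>+x. h x * ennreal ((cmod (g x))\<^sup>2) \<partial>M) \<noteq> \<infinity>"
    using L2_borel_measurable[OF g] by (simp add: L2_compose_iff)
  then have "AE x in M. h x * ennreal ((cmod (g x))\<^sup>2) \<noteq> \<infinity>"
    using L2_borel_measurable[OF g] by (intro nn_integral_PInf_AE) simp_all
  then show ?thesis
    by (auto elim!: AE_mp simp: ennreal_mult_eq_top_iff)
qed

lemma AE_h_finite:
  assumes "densely_defined M (C)"
  shows "AE x in M. h x \<noteq> \<infinity>"
proof (rule sigma_finite_measure.AE_from_finite_bounded_pieces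
    [OF sigma_finite, where b = "\<lambda>_. 0" and \<psi> = id and N = M])
  fix S assume S[measurable]: "S \<in> sets M" and S_finite: "emeasure M S < \<infinity>"
  define B where "B = {x \<in> S. h x = \<infinity>}"
  have B[measurable]: "B \<in> sets M" unfolding B_def by measurable
  have B_finite: "emeasure M B < \<infinity>"
    using emeasure_mono[of B S M] S_finite by (auto simp: B_def)
  have "measure M B = 0"
  proof (rule ccontr)
    assume "measure M B \<noteq> 0"
    then have pos: "0 < sqrt (measure M B)" by (simp add: zero_less_measure_iff)
    define f where "f x = complex_of_real (indicator B x)" for x
    have [measurable]: "f \<in> borel_measurable M" unfolding f_def by measurable
    have f: "f \<in> L2 M"
      by (rule L2_bounded_finite_support[OF _ B B_finite, where c = 1]) (auto simp: f_def)
    then obtain g where g: "g \<in> Domain (C)" and close: "l2norm M (\<lambda>x. f x - g x) < sqrt (measure M B)"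
      using assms pos unfolding densely_defined_def by blast
    have g_L2: "g \<in> L2 M" using g by (auto simp: comp_op_def)
    have "measure M B = (LINT x|M. indicator B x)" by simp
    also have "\<dots> \<le> (LINT x|M. (cmod (f x - g x))\<^sup>2)"
    proof (rule integral_mono_AE)
      show "integrable M (indicat_real B)"
        using B_finite by (intro integrable_real_indicator) auto
      show "integrable M (\<lambda>x. (cmod (f x - g x))\<^sup>2)"
        using f g_L2 by (rule L2_integrable_diff_sq)
      show "AE x in M. indicat_real B x \<le> (cmod (f x - g x))\<^sup>2"
        using comp_op_domain_vanishes_where_h_infinite[OF g]
        by (auto elim!: AE_mp simp: indicator_def f_def B_def)
    qed
    finally have "sqrt (measure M B) \<le> l2norm M (\<lambda>x. f x - g x)"
      by (simp add: l2norm_def)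
    with close show False by simp
  qed
  then have "B \<in> null_sets M"
    using B_finite by (simp add: null_sets_def emeasure_eq_ennreal_measure less_top)
  then show "AE x in M. id x \<in> S \<longrightarrow> h x \<noteq> \<infinity>"
    by (auto elim!: AE_mp[OF AE_not_in] simp: B_def)
qed simp_all

lemma adjoint_comp_op_compose:
  assumes hf: "AE x in M. h x \<noteq> \<infinity>" and f[measurable]: "f \<in> borel_measurable M"
    and "(\<lambda>x. f (\<phi> x)) \<in> L2 M" and "(\<lambda>x. complex_of_real (hr x) * f x) \<in> L2 M"
  shows "((\<lambda>x. f (\<phi> x)), (\<lambda>x. complex_of_real (hr x) * f x)) \<in> adjoint M (C)"
  unfolding adjoint_def
proof (safe intro!: assms(3,4))
  fix u w assume "(u, w) \<in> C"
  then have u: "u \<in> L2 M" and w: "w \<in> L2 M" and w_eq: "AE x in M. w x = u (\<phi> x)"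
    by (auto simp: comp_op_def)
  have [measurable]: "u \<in> borel_measurable M" "w \<in> borel_measurable M"
    using u w by (simp_all add: L2_borel_measurable)
  have ae: "AE x in M. w x * cnj (f (\<phi> x)) = u (\<phi> x) * cnj (f (\<phi> x))"
    using w_eq by (auto elim!: AE_mp)
  have "integrable M (\<lambda>x. (\<lambda>y. u y * cnj (f y)) (\<phi> x))"
    by (rule integrable_cong_AE_imp[OF L2_integrable_mult_cnj[OF w assms(3)] _ ae]) measurable
  then have compose: "(LINT x|M. u (\<phi> x) * cnj (f (\<phi> x))) = (LINT x|M. complex_of_real (hr x) * (u x * cnj (f x)))"
    by (intro integral_compose(2)[OF hf]) measurable
  have "ip M w (\<lambda>x. f (\<phi> x)) = (LINT x|M. u (\<phi> x) * cnj (f (\<phi> x)))"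
    unfolding ip_def by (rule integral_cong_AE[OF _ _ ae]) measurable
  also have "\<dots> = ip M u (\<lambda>x. complex_of_real (hr x) * f x)"
    unfolding compose ip_def by (simp add: mult_ac)
  finally show "ip M w (\<lambda>x. f (\<phi> x)) = ip M u (\<lambda>x. complex_of_real (hr x) * f x)" .
qed

lemma comp_op_commutation_on_indicator:
  assumes commute: "(C O adjoint M C) O C \<subseteq> C O (C O adjoint M C)"
    and hf: "AE x in M. h x \<noteq> \<infinity>"
    and E[measurable]: "E \<in> sets M" and E_finite: "emeasure M E < \<infinity>"
    and h_bounded: "\<And>x. x \<in> E \<Longrightarrow> h x \<le> ennreal c" and "0 \<le> c"
  obtains g where "(g, \<lambda>x. complex_of_real (hr (\<phi> x) * indicator E (\<phi> x))) \<in> adjoint M C"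
    and "AE x in M. g x = complex_of_real (indicator E (\<phi> (\<phi> x)))"
proof -
  have hr_bounded: "hr x \<le> c" if "x \<in> E" for x
    unfolding hr_def using enn2real_mono[OF h_bounded[OF that]] \<open>0 \<le> c\<close> by simp
  define f where "f x = complex_of_real (indicator E x)" for x
  define k where "k x = complex_of_real (hr x) * f x" for x
  have [measurable]: "f \<in> borel_measurable M" unfolding f_def by measurable
  have k_measurable[measurable]: "k \<in> borel_measurable M" unfolding k_def by measurable
  have f: "f \<in> L2 M" "(\<lambda>x. f (\<phi> x)) \<in> L2 M"
    by (rule L2_compose_bounded_finite_support[OF _ E E_finite h_bounded \<open>0 \<le> c\<close>, where d = 1];
        simp add: f_def)+
  have k_bounded: "cmod (k x) \<le> c" for x
    by (cases "x \<in> E") (simp_all add: k_def f_def hr_bounded hr_nonneg \<open>0 \<le> c\<close>)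
  have k_support: "k x = 0" if "x \<notin> E" for x
    using that by (simp add: k_def f_def)
  have k: "k \<in> L2 M" "(\<lambda>x. k (\<phi> x)) \<in> L2 M"
    using L2_compose_bounded_finite_support[OF k_measurable E E_finite h_bounded \<open>0 \<le> c\<close> k_bounded k_support]
    by simp_all
  \<comment> \<open>\<open>C\<^sup>*\<close> maps \<open>f \<circ> \<phi>\<close> to \<open>h f\<close>, so \<open>f\<close> lies in the domain of \<open>C (C\<^sup>*C)\<close>.\<close>
  have "(f, \<lambda>x. k (\<phi> x)) \<in> (C O adjoint M C) O C"
    using comp_op_graphI[OF f] adjoint_comp_op_compose[OF hf _ f(2) k(1)[unfolded k_def]]
      comp_op_graphI[OF k] by (auto simp: k_def)
  with commute obtain g1 g where g1: "(f, g1) \<in> C" and g: "(g1, g) \<in> C"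
    and g_adjoint: "(g, \<lambda>x. k (\<phi> x)) \<in> adjoint M C"
    by blast
  have "AE x in M. g x = f (\<phi> (\<phi> x))"
    using g AE_compose[of "\<lambda>x. g1 x = f (\<phi> x)"] g1 by (auto simp: comp_op_def elim!: AE_mp)
  with g_adjoint show thesis
    by (intro that) (simp_all add: k_def f_def)
qed

lemma comp_op_commutation_orthogonal:
  assumes commute: "(C O adjoint M C) O C \<subseteq> C O (C O adjoint M C)"
    and hf: "AE x in M. h x \<noteq> \<infinity>"
    and E[measurable]: "E \<in> sets M" and E_finite: "emeasure M E < \<infinity>"
    and h_bounded: "\<And>x. x \<in> E \<Longrightarrow> h x \<le> ennreal c" and "0 \<le> c"
    and u: "u \<in> L2 M" and u_compose: "(\<lambda>x. u (\<phi> x)) \<in> L2 M"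
  shows "(LINT x|M. u x * complex_of_real (indicator E (\<phi> x) * (hr x - hr (\<phi> x)))) = 0"
proof -
  obtain g where g_adjoint: "(g, \<lambda>x. complex_of_real (hr (\<phi> x) * indicator E (\<phi> x))) \<in> adjoint M C"
    and g_eq: "AE x in M. g x = complex_of_real (indicator E (\<phi> (\<phi> x)))"
    by (rule comp_op_commutation_on_indicator[OF commute hf E E_finite h_bounded \<open>0 \<le> c\<close>])
  have g_L2: "g \<in> L2 M" using g_adjoint by (simp add: adjoint_def)
  have [measurable]: "u \<in> borel_measurable M" "g \<in> borel_measurable M"
    using u g_L2 by (simp_all add: L2_borel_measurable)
  let ?v = "\<lambda>y. u y * complex_of_real (indicator E (\<phi> y))"
  have ae: "AE x in M. u (\<phi> x) * cnj (g x) = ?v (\<phi> x)"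
    using g_eq by (auto elim!: AE_mp)
  have "integrable M (\<lambda>x. ?v (\<phi> x))"
    by (rule integrable_cong_AE_imp[OF L2_integrable_mult_cnj[OF u_compose g_L2] _ ae]) measurable
  note compose = integral_compose[OF hf _ this]
  have "ip M (\<lambda>x. u (\<phi> x)) g = (LINT x|M. ?v (\<phi> x))"
    unfolding ip_def by (rule integral_cong_AE[OF _ _ ae]) measurable
  also have "\<dots> = (LINT x|M. complex_of_real (hr x) * ?v x)"
    by (rule compose(2)) measurable
  finally have "ip M (\<lambda>x. u (\<phi> x)) g = (LINT x|M. complex_of_real (hr x) * ?v x)" .
  moreover have "ip M (\<lambda>x. u (\<phi> x)) g = ip M u (\<lambda>x. complex_of_real (hr (\<phi> x) * indicator E (\<phi> x)))"
    using g_adjoint comp_op_graphI[OF u u_compose] by (auto simp: adjoint_def)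
  moreover have "integrable M (\<lambda>x. u x * cnj (complex_of_real (hr (\<phi> x) * indicator E (\<phi> x))))"
    using g_adjoint by (intro L2_integrable_mult_cnj[OF u]) (simp add: adjoint_def)
  ultimately have "(LINT x|M. complex_of_real (hr x) * ?v x
      - u x * cnj (complex_of_real (hr (\<phi> x) * indicator E (\<phi> x)))) = 0"
    using compose(1) by (simp add: ip_def)
  then show ?thesis
    by (simp add: algebra_simps)
qed

lemma comp_op_commutation_imp_hr_compose_eq:
  assumes commute: "(C O adjoint M C) O C \<subseteq> C O (C O adjoint M C)"
    and hf: "AE x in M. h x \<noteq> \<infinity>"
    and E[measurable]: "E \<in> sets M" and E_finite: "emeasure M E < \<infinity>"
    and h_bounded: "\<And>x. x \<in> E \<Longrightarrow> h x \<le> ennreal c" and "0 \<le> c"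
  shows "AE x in M. \<phi> x \<in> E \<longrightarrow> hr x = hr (\<phi> x)"
proof -
  define D where "D x = indicator E (\<phi> x) * (hr x - hr (\<phi> x))" for x
  have [measurable]: "D \<in> borel_measurable M" unfolding D_def by measurable
  have "AE x in M. D x = 0"
  proof (rule sigma_finite_measure.AE_from_finite_bounded_pieces
      [OF sigma_finite, where b = "\<lambda>x. h x + ennreal \<bar>D x\<bar>" and \<psi> = id and N = M])
    show "AE x in M. h (id x) + ennreal \<bar>D (id x)\<bar> < \<infinity>"
      using hf by (auto elim!: AE_mp simp: less_top)
  next
    fix S n assume S[measurable]: "S \<in> sets M" and S_finite: "emeasure M S < \<infinity>"
      and bounded: "\<And>y. y \<in> S \<Longrightarrow> h y + ennreal \<bar>D y\<bar> \<le> of_nat n"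
    have h_S: "h y \<le> ennreal (real n)" and D_S: "\<bar>D y\<bar> \<le> real n" if "y \<in> S" for y
    proof -
      have "h y \<le> h y + ennreal \<bar>D y\<bar>" "ennreal \<bar>D y\<bar> \<le> h y + ennreal \<bar>D y\<bar>"
        by simp_all
      then have "h y \<le> of_nat n" "ennreal \<bar>D y\<bar> \<le> of_nat n"
        using bounded[OF that] by (blast intro: order.trans)+
      then show "h y \<le> ennreal (real n)" "\<bar>D y\<bar> \<le> real n"
        by (simp_all add: ennreal_of_nat_eq_real_of_nat)
    qed
    define u where "u x = complex_of_real (D x * indicator S x)" for x
    have [measurable]: "u \<in> borel_measurable M" unfolding u_def by measurable
    have u: "u \<in> L2 M" "(\<lambda>x. u (\<phi> x)) \<in> L2 M"
      by (rule L2_compose_bounded_finite_support[OF _ S S_finite h_S, where d = "real n"];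
          simp add: u_def D_S indicator_def)+
    have "(LINT x|M. u x * complex_of_real (D x)) = 0"
      unfolding D_def by (rule comp_op_commutation_orthogonal[OF commute hf E E_finite h_bounded \<open>0 \<le> c\<close> u])
    moreover have "(LINT x|M. u x * complex_of_real (D x)) = complex_of_real (LINT x|M. D x * D x * indicator S x)"
      unfolding integral_complex_of_real[symmetric] by (simp add: u_def mult_ac)
    moreover have "integrable M (\<lambda>x. D x * D x * indicator S x)"
    proof (rule integrableI_bounded_set[OF S _ S_finite, where B = "real n * real n"])
      have "\<bar>D x\<bar> * \<bar>D x\<bar> \<le> real n * real n" if "x \<in> S" for x
        using D_S[OF that] by (intro mult_mono) simp_all
      then show "AE x\<in>S in M. norm (D x * D x * indicator S x) \<le> real n * real n"
        by (auto intro!: AE_I2 simp: abs_mult)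
    qed (auto intro!: AE_I2)
    ultimately have "AE x in M. D x * D x * indicator S x = 0"
      by (subst integral_nonneg_eq_0_iff_AE[symmetric]) auto
    then show "AE x in M. id x \<in> S \<longrightarrow> D x = 0"
      by (auto elim!: AE_mp)
  qed (simp_all add: phi_in_space)
  then show ?thesis by (auto elim!: AE_mp simp: D_def)
qed

lemma quasinormal_h_compose:
  assumes "quasinormal M C"
  shows "AE x in M. h x \<noteq> \<infinity>" and "AE x in M. h (\<phi> x) = h x"
proof -
  show hf: "AE x in M. h x \<noteq> \<infinity>"
    using assms by (intro AE_h_finite) (simp add: quasinormal_def)
  have pieces: "AE x in M. \<phi> x \<in> S \<longrightarrow> hr x = hr (\<phi> x)"
    if "S \<in> sets M" "emeasure M S < \<infinity>" "\<And>y. y \<in> S \<Longrightarrow> h y \<le> of_nat n" for S n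
    using that(3)
    by (intro comp_op_commutation_imp_hr_compose_eq[OF quasinormal_commutation[OF assms] hf that(1,2) _ of_nat_0_le_iff])
      (simp add: ennreal_of_nat_eq_real_of_nat)
  have finite: "AE x in M. h (\<phi> x) < \<infinity>"
    using AE_compose[OF hf] by eventually_elim (simp add: less_top)
  have "AE x in M. hr x = hr (\<phi> x)"
    by (rule sigma_finite_measure.AE_from_finite_bounded_pieces
        [OF sigma_finite borel_measurable_h phi_in_space finite pieces])
  with hf AE_compose[OF hf] show "AE x in M. h (\<phi> x) = h x"
  proof eventually_elim
    case (elim x)
    then show ?case using h_eq_hr[of x] h_eq_hr[of "\<phi> x"] by simp
  qed
qed

lemma CC_nn_integral_emeasure:
  assumes Q: "prob_family M Q" and CC: "CC M \<phi> Q"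
    and hf: "AE x in M. h x \<noteq> \<infinity>" and hp: "AE x in M. h x \<noteq> 0"
    and \<sigma>[measurable]: "\<sigma> \<in> sets Bor_Rplus" and g[measurable]: "g \<in> borel_measurable M"
  shows "(\<integral>\<^sup>+x. g (\<phi> x) * emeasure (Q x) \<sigma> \<partial>M) = (\<integral>\<^sup>+y. g y * (\<integral>\<^sup>+t. ennreal t * indicator \<sigma> t \<partial>Q y) \<partial>M)"
proof -
  obtain e where e: "is_cond_exp M \<phi> (\<lambda>x. emeasure (Q x) \<sigma>) e"
    and e_eq: "AE x in M. e x = cdiv (\<integral>\<^sup>+t\<in>\<sigma>. ennreal t \<partial>Q (\<phi> x)) (h (\<phi> x))"
    using CC \<sigma> unfolding CC_def by blast
  define a where "a y = (\<integral>\<^sup>+t. ennreal t * indicator \<sigma> t \<partial>Q y)" for y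
  have [measurable]: "a \<in> borel_measurable M"
    unfolding a_def by (rule prob_family_nn_integral_measurable[OF Q]) measurable
  have "(\<integral>\<^sup>+x. g (\<phi> x) * emeasure (Q x) \<sigma> \<partial>M) = (\<integral>\<^sup>+x. g (\<phi> x) * e x \<partial>M)"
    using e by (simp add: is_cond_exp_def)
  also have "\<dots> = (\<integral>\<^sup>+x. (\<lambda>y. g y * cdiv (a y) (h y)) (\<phi> x) \<partial>M)"
    using e_eq by (intro nn_integral_cong_AE) (auto elim!: AE_mp simp: a_def mult.commute)
  also have "\<dots> = (\<integral>\<^sup>+y. h y * (g y * cdiv (a y) (h y)) \<partial>M)"
    by (rule nn_integral_compose) (simp add: cdiv_def)
  also have "\<dots> = (\<integral>\<^sup>+y. g y * a y \<partial>M)"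
    using hf hp
  proof (intro nn_integral_cong_AE, eventually_elim)
    case (elim y)
    then have "h y * cdiv (a y) (h y) = a y"
      by (simp add: cdiv_def ennreal_times_divide mult.commute[of "h y"] ennreal_mult_divide_eq)
    then show ?case by (simp add: mult.left_commute[of "h y"] mult.commute)
  qed
  finally show ?thesis by (simp add: a_def)
qed

lemma CC_nn_integral:
  assumes Q: "prob_family M Q" and CC: "CC M \<phi> Q"
    and hf: "AE x in M. h x \<noteq> \<infinity>" and hp: "AE x in M. h x \<noteq> 0"
    and g[measurable]: "g \<in> borel_measurable M" and u[measurable]: "u \<in> borel_measurable Bor_Rplus"
  shows "(\<integral>\<^sup>+x. g (\<phi> x) * (\<integral>\<^sup>+t. u t \<partial>Q x) \<partial>M) = (\<integral>\<^sup>+y. g y * (\<integral>\<^sup>+t. ennreal t * u t \<partial>Q y) \<partial>M)"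
proof (cases "space M = {}")
  case False
  \<comment> \<open>Both sides are integrals of \<open>u\<close> against measures on \<open>\<real>\<^sub>+\<close>, which agree on sets by (CC).\<close>
  let ?L = "density M (\<lambda>x. g (\<phi> x)) \<bind> Q" and ?R = "density (density M g \<bind> Q) ennreal"
  have kernel: "Q \<in> density M f \<rightarrow>\<^sub>M subprob_algebra Bor_Rplus" for f
    using prob_family_measurable_subprob_algebra[OF Q] by (simp add: measurable_cong_sets[OF sets_density refl])
  have sets_bind: "sets (density M f \<bind> Q) = sets Bor_Rplus" for f
    using False by (intro sets_bind[where N = Bor_Rplus]) (simp_all add: prob_familyD[OF Q])
  have "?L = ?R"
  proof (rule measure_eqI)
    show "sets ?L = sets ?R" by (simp add: sets_bind)
    fix \<sigma> assume "\<sigma> \<in> sets ?L"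
    then have [measurable]: "\<sigma> \<in> sets Bor_Rplus" by (simp add: sets_bind)
    have [measurable]: "(\<lambda>x. emeasure (Q x) \<sigma>) \<in> borel_measurable M"
      using Q by (simp add: prob_family_def)
    have "emeasure ?L \<sigma> = (\<integral>\<^sup>+x. g (\<phi> x) * emeasure (Q x) \<sigma> \<partial>M)"
      using False by (simp add: emeasure_bind[OF _ kernel] nn_integral_density)
    also have "\<dots> = (\<integral>\<^sup>+y. g y * (\<integral>\<^sup>+t. ennreal t * indicator \<sigma> t \<partial>Q y) \<partial>M)"
      by (rule CC_nn_integral_emeasure[OF Q CC hf hp]) simp_all
    also have "\<dots> = (\<integral>\<^sup>+y. (\<integral>\<^sup>+t. ennreal t * indicator \<sigma> t \<partial>Q y) \<partial>density M g)"
      by (rule nn_integral_density[symmetric]) (simp_all add: prob_family_nn_integral_measurable[OF Q])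
    also have "\<dots> = (\<integral>\<^sup>+t. ennreal t * indicator \<sigma> t \<partial>density M g \<bind> Q)"
      by (rule nn_integral_bind[OF _ kernel, symmetric]) simp
    also have "\<dots> = emeasure ?R \<sigma>"
      by (simp add: emeasure_density sets_bind measurable_cong_sets[OF sets_bind refl] mult.commute)
    finally show "emeasure ?L \<sigma> = emeasure ?R \<sigma>" .
  qed
  then have "(\<integral>\<^sup>+t. u t \<partial>?L) = (\<integral>\<^sup>+t. u t \<partial>?R)" by simp
  moreover have "(\<lambda>x. \<integral>\<^sup>+t. u t \<partial>Q x) \<in> borel_measurable M"
    and "(\<lambda>x. \<integral>\<^sup>+t. ennreal t * u t \<partial>Q x) \<in> borel_measurable M"
    by (intro prob_family_nn_integral_measurable[OF Q]; measurable)+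
  ultimately show ?thesis
    by (simp add: nn_integral_bind[OF _ kernel] nn_integral_density measurable_cong_sets[OF sets_bind refl])
qed (simp add: nn_integral_empty)

lemma CC_unique:
  assumes hc: "AE x in M. h (\<phi> x) = h x" and hf: "AE x in M. h x \<noteq> \<infinity>"
    and Q: "prob_family M Q" and CC: "CC M \<phi> Q"
  shows "AE x in M. Q x = return Bor_Rplus (hr x)"
proof -
  have hp: "AE x in M. h x \<noteq> 0"
    using AE_h_compose_nonzero hc by eventually_elim simp
  define m1 where "m1 y = (\<integral>\<^sup>+t. ennreal t \<partial>Q y)" for y
  define m2 where "m2 y = (\<integral>\<^sup>+t. ennreal t * ennreal t \<partial>Q y)" for y
  have [measurable]: "m1 \<in> borel_measurable M" "m2 \<in> borel_measurable M"
    unfolding m1_def m2_def by (intro prob_family_nn_integral_measurable[OF Q]; measurable)+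
  have space_1: "emeasure (Q x) (space (Q x)) = 1" if "x \<in> space M" for x
    using prob_space.emeasure_space_1[OF prob_familyD(1)[OF Q that]] .
  note CC_nn_integral = CC_nn_integral[OF Q CC hf hp]
  have mean: "AE x in M. h x = m1 x"
  proof (rule sigma_finite_measure.density_unique2[OF sigma_finite borel_measurable_h])
    fix A assume [measurable]: "A \<in> sets M"
    have "(\<integral>\<^sup>+x. h x * indicator A x \<partial>M) = (\<integral>\<^sup>+x. indicator A (\<phi> x) * (\<integral>\<^sup>+t. 1 \<partial>Q x) \<partial>M)"
      by (simp add: nn_integral_compose[symmetric] space_1 cong: nn_integral_cong)
    also have "\<dots> = (\<integral>\<^sup>+x. m1 x * indicator A x \<partial>M)"
      using CC_nn_integral[of "indicator A" "\<lambda>_. 1"] by (simp add: m1_def mult.commute)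
    finally show "(\<integral>\<^sup>+x\<in>A. h x \<partial>M) = (\<integral>\<^sup>+x\<in>A. m1 x \<partial>M)" .
  qed simp
  have second_moment: "AE x in M. h x * h x = m2 x"
  proof (rule sigma_finite_measure.density_unique2[OF sigma_finite])
    fix A assume [measurable]: "A \<in> sets M"
    have "(\<integral>\<^sup>+x. h x * h x * indicator A x \<partial>M) = (\<integral>\<^sup>+x. h x * (indicator A x * h x) \<partial>M)"
      by (simp add: mult_ac)
    also have "\<dots> = (\<integral>\<^sup>+x. indicator A (\<phi> x) * h (\<phi> x) \<partial>M)"
      by (rule nn_integral_compose[symmetric]) measurable
    also have "\<dots> = (\<integral>\<^sup>+x. indicator A (\<phi> x) * (\<integral>\<^sup>+t. ennreal t \<partial>Q x) \<partial>M)"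
      using hc mean by (intro nn_integral_cong_AE) (auto elim!: AE_mp simp: m1_def)
    also have "\<dots> = (\<integral>\<^sup>+x. m2 x * indicator A x \<partial>M)"
      using CC_nn_integral[of "indicator A" ennreal] by (simp add: m2_def mult.commute)
    finally show "(\<integral>\<^sup>+x\<in>A. h x * h x \<partial>M) = (\<integral>\<^sup>+x\<in>A. m2 x \<partial>M)" .
  qed simp_all
  from AE_space hf mean second_moment show ?thesis
  proof eventually_elim
    case (elim x)
    then have "h x = ennreal (hr x)" by (intro h_eq_hr)
    with elim hr_nonneg[of x] show ?case
      by (intro prob_space_eq_return_if_variance_zero prob_familyD[OF Q])
        (simp_all add: m1_def m2_def ennreal_mult)
  qed
qed

lemma prob_family_return_hr_compose:
  "prob_family (vimage_algebra (space M) \<phi> M) (\<lambda>x. return Bor_Rplus (hr (\<phi> x)))"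
  unfolding prob_family_def
proof (intro conjI ballI)
  fix x
  show "prob_space (return Bor_Rplus (hr (\<phi> x)))"
    by (rule prob_space_return) (simp add: space_restrict_space hr_nonneg)
  show "sets (return Bor_Rplus (hr (\<phi> x))) = sets Bor_Rplus" by simp
next
  fix \<sigma> assume "\<sigma> \<in> sets Bor_Rplus"
  then have [measurable]: "\<sigma> \<in> sets borel" by (simp add: sets_restrict_space_iff)
  have "\<phi> \<in> vimage_algebra (space M) \<phi> M \<rightarrow>\<^sub>M M"
    by (rule measurable_vimage_algebra1) (simp add: phi_in_space)
  from measurable_compose[OF this, of "\<lambda>y. indicator \<sigma> (hr y) :: ennreal"]
  show "(\<lambda>x. emeasure (return Bor_Rplus (hr (\<phi> x))) \<sigma>) \<in> borel_measurable (vimage_algebra (space M) \<phi> M)"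
    using \<open>\<sigma> \<in> sets Bor_Rplus\<close> by simp
qed

lemma CC_return_hr_compose:
  assumes hc: "AE x in M. h (\<phi> x) = h x" and hf: "AE x in M. h x \<noteq> \<infinity>"
  shows "CC M \<phi> (\<lambda>x. return Bor_Rplus (hr (\<phi> x)))"
  unfolding CC_def
proof (intro ballI exI conjI)
  fix \<sigma> assume \<sigma>: "\<sigma> \<in> sets Bor_Rplus"
  let ?P = "\<lambda>x. return Bor_Rplus (hr (\<phi> x))"
  show "is_cond_exp M \<phi> (\<lambda>x. emeasure (?P x) \<sigma>) (\<lambda>x. emeasure (?P x) \<sigma>)"
    using prob_family_return_hr_compose \<sigma> by (simp add: is_cond_exp_def prob_family_def)
  show "AE x in M. emeasure (?P x) \<sigma> = cdiv (\<integral>\<^sup>+t\<in>\<sigma>. ennreal t \<partial>?P (\<phi> x)) (h (\<phi> x))"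
    using AE_compose[OF hc] AE_compose[OF hf] AE_h_compose_nonzero
  proof eventually_elim
    case (elim x)
    have "hr (\<phi> (\<phi> x)) = hr (\<phi> x)" using elim(1) by (simp add: hr_def)
    moreover have "h (\<phi> x) = ennreal (hr (\<phi> x))" using elim(2) by (rule h_eq_hr)
    ultimately show ?case
      using elim(3) \<sigma> hr_nonneg[of "\<phi> x"]
      by (simp add: nn_integral_return space_restrict_space cdiv_def ennreal_mult_divide_eq
          mult.commute[of "ennreal (hr (\<phi> x))"])
  qed
qed

end

theorem proposition10:
  fixes M :: "'a measure" and \<phi> :: "'a \<Rightarrow> 'a"
  assumes "sigma_finite_measure M"
    and "nonsingular M \<phi>"
    and "quasinormal M (comp_op M \<phi>)"
  shows "\<exists>P. prob_family (vimage_algebra (space M) \<phi> M) P \<and> CC M \<phi> P \<and>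
           (\<forall>Q. prob_family M Q \<and> CC M \<phi> Q \<longrightarrow> (AE x in M. Q x = P x))"
proof -
  interpret nonsingular_transformation M \<phi> by (rule nonsingular_transformation.intro) fact+
  have hf: "AE x in M. h x \<noteq> \<infinity>" and hc: "AE x in M. h (\<phi> x) = h x"
    using quasinormal_h_compose[OF assms(3)] by auto
  have "AE x in M. Q x = return Bor_Rplus (hr (\<phi> x))" if "prob_family M Q" "CC M \<phi> Q" for Q
    using CC_unique[OF hc hf that] hc by eventually_elim (simp add: hr_def)
  then show ?thesis
    using prob_family_return_hr_compose CC_return_hr_compose[OF hc hf] by blast
qed

end
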